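(* Let $n\ge2$, $F\in GL^+(n)$, $\mu>0$, $\mu_c\ge0$. (i) If $\mu=\mu_c$, then $R\in SO(n)$ is a critical point of $\widetilde W_{\mu,\mu_c}(\cdot;F)$ if and only if $FR^T=RF^T$. (ii) If $\mu\ne\mu_c$, then $R\in SO(n)$ is a critical point of $\widetilde W_{\mu,\mu_c}(\cdot;F)$ if and only if $R$ is a critical point of $\widetilde W_{1,0}(\cdot;\widehat F_{\mu,\mu_c})$, which holds if and only if $$\widehat F_{\mu,\mu_c}R^T\widehat F_{\mu,\mu_c}R^T-R\widehat F_{\mu,\mu_c}^TR\widehat F_{\mu,\mu_c}^T=2\big(\widehat F_{\mu,\mu_c}R^T-R\widehat F_{\mu,\mu_c}^T\big).$$
   Context: $\mathrm{sym}(Y)=\tfrac12(Y+Y^T)$, $\mathrm{skew}(Y)=\tfrac12(Y-Y^T)$, $\|Y\|^2=\mathrm{tr}(Y^TY)$. For $F\in GL^+(n)$, $\mu>0$, $\mu_c\ge0$: $\widetilde W_{\mu,\mu_c}(R;F)=\mu\|\mathrm{sym}(R^TF-\mathbb I_n)\|^2+\mu_c\|\mathrm{skew}(R^TF-\mathbb I_n)\|^2$ on $SO(n)$; for any invertible $G$, $\widetilde W_{1,0}(R;G)=\|\mathrm{sym}(R^TG-\mathbb I_n)\|^2$. $\widehat F_{\mu,\mu_c}=\frac{\mu-\mu_c}{\mu}F$. Critical points are those of the restriction to the submanifold $SO(n)\subset\mathcal M_{n\times n}(\mathbb R)$. *)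

theory Defs
  imports "HOL-Analysis.Analysis"
begin

definition msym :: "real^'n^'n \<Rightarrow> real^'n^'n" where
  "msym Y = (1/2) *\<^sub>R (Y + transpose Y)"

definition mskew :: "real^'n^'n \<Rightarrow> real^'n^'n" where
  "mskew Y = (1/2) *\<^sub>R (Y - transpose Y)"

definition frob2 :: "real^'n^'n \<Rightarrow> real" where
  "frob2 Y = trace (transpose Y ** Y)"

definition SOn :: "(real^'n^'n) set" where
  "SOn = {R. orthogonal_matrix R \<and> det R = 1}"

definition Wt :: "real \<Rightarrow> real \<Rightarrow> real^'n^'n \<Rightarrow> real^'n^'n \<Rightarrow> real" where
  "Wt mu muc F R = mu * frob2 (msym (transpose R ** F - mat 1))
                 + muc * frob2 (mskew (transpose R ** F - mat 1))"

definition Fhat :: "real \<Rightarrow> real \<Rightarrow> real^'n^'n \<Rightarrow> real^'n^'n" where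
  "Fhat mu muc F = ((mu - muc) / mu) *\<^sub>R F"

text \<open>R is a critical point of the restriction of f to the submanifold SO(n):
  R lies in SO(n) and the derivative of f along every differentiable curve in
  SO(n) through R (i.e. along every tangent vector of SO(n) at R) vanishes.\<close>
definition crit_SO :: "(real^'n^'n \<Rightarrow> real) \<Rightarrow> real^'n^'n \<Rightarrow> bool" where
  "crit_SO f R \<longleftrightarrow> R \<in> SOn \<and>
     (\<forall>\<gamma> :: real \<Rightarrow> real^'n^'n. (\<forall>t. \<gamma> t \<in> SOn) \<and> \<gamma> 0 = R \<and> \<gamma> differentiable (at 0)
        \<longrightarrow> ((f \<circ> \<gamma>) has_real_derivative 0) (at 0))"

end

theory Submission
  imports Defs
begin

text \<open>
  Under the Frobenius inner product \<open>\<langle>X, Y\<rangle> = tr (X\<^sup>T Y)\<close>, the velocities of curves in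
  SO(n) through R are the matrices R B with B skew, and each generator E_ij - E_ji of the skew
  matrices is the velocity of a curve of plane rotations. Hence, if f has differential
  \<open>V \<mapsto> \<langle>P, V\<rangle>\<close> at R, then R is critical for f on SO(n) iff \<open>R\<^sup>T P\<close> is symmetric.
  For the energy, \<open>P = 2 F N\<^sup>T\<close> with \<open>N = \<mu> sym(R\<^sup>T F - 1) + \<mu>\<^sub>c skew(R\<^sup>T F - 1)\<close>, and for
  \<open>\<mu> = \<mu>\<^sub>c\<close> this gives part (i) at once. For \<open>\<mu> \<noteq> \<mu>\<^sub>c\<close> the energy is, on SO(n), an affine
  function of the energy \<open>W\<^sub>1\<^sub>,\<^sub>0\<close> of the rescaled F with slope \<open>\<mu>\<^sup>2/(\<mu> - \<mu>\<^sub>c) \<noteq> 0\<close>, so the two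
  have the same critical points, which the criterion characterises by the stated equation.
\<close>

lemma matrix_add_rdistrib: "((A::real^'n^'m) + B) ** C = A ** C + B ** C"
  by (vector matrix_matrix_mult_def sum.distrib[symmetric] field_simps)

lemma matrix_diff_rdistrib: "((A::real^'n^'m) - B) ** C = A ** C - B ** C"
  by (vector matrix_matrix_mult_def sum_subtractf[symmetric] field_simps)

lemma matrix_diff_ldistrib: "(C::real^'n^'m) ** (A - B) = C ** A - C ** B"
  by (vector matrix_matrix_mult_def sum_subtractf[symmetric] field_simps)

lemma transpose_add: "transpose ((A::real^'n^'m) + B) = transpose A + transpose B"
  by (simp add: transpose_def vec_eq_iff)

lemma transpose_diff: "transpose ((A::real^'n^'m) - B) = transpose A - transpose B"
  by (simp add: transpose_def vec_eq_iff)

lemma bounded_bilinear_matrix_mult: "bounded_bilinear (\<lambda>(A::real^'n^'n) B. A ** B)"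
proof -
  have "bilinear (\<lambda>(A::real^'n^'n) B. A ** B)"
    unfolding bilinear_def
    by (auto intro!: linearI simp: matrix_add_ldistrib matrix_add_rdistrib
        scalar_matrix_assoc matrix_scalar_ac)
  then show ?thesis
    using bilinear_conv_bounded_bilinear by blast
qed

lemma bounded_linear_transpose: "bounded_linear (transpose :: real^'n^'m \<Rightarrow> real^'m^'n)"
  unfolding linear_conv_bounded_linear[symmetric]
  by (auto intro!: linearI simp: transpose_def vec_eq_iff)

lemma inner_matrix_eq_trace: "(X::real^'n^'n) \<bullet> Y = trace (transpose X ** Y)"
  by (simp add: inner_vec_def trace_def matrix_matrix_mult_def transpose_def, rule sum.swap)

lemma frob2_eq_inner: "frob2 Y = Y \<bullet> Y"
  by (simp add: frob2_def inner_matrix_eq_trace)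

lemma inner_transpose_transpose: "transpose (X::real^'n^'n) \<bullet> transpose Y = X \<bullet> Y"
  unfolding inner_vec_def transpose_def by (simp, rule sum.swap)

lemma inner_matrix_mult_left: "((R::real^'n^'n) ** (A::real^'n^'n)) \<bullet> P = A \<bullet> (transpose R ** P)"
  unfolding inner_matrix_eq_trace by (simp add: matrix_transpose_mul matrix_mul_assoc)

lemma orthogonal_matrix_cancel:
  assumes "orthogonal_matrix (R::real^'n^'n)"
  shows "R ** transpose R = mat 1" "transpose R ** R = mat 1"
    "(A ** R) ** transpose R = A" "(A ** transpose R) ** R = A"
  using assms by (auto simp: orthogonal_matrix_def matrix_mul_assoc[symmetric])

lemma orthogonal_conj_eq_iff:
  assumes R: "orthogonal_matrix (R::real^'n^'n)"
  shows "(R ** Z) ** transpose R = (R ** W) ** transpose R \<longleftrightarrow> Z = W"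
proof
  assume "(R ** Z) ** transpose R = (R ** W) ** transpose R"
  then have "transpose R ** ((R ** Z) ** transpose R) ** R = transpose R ** ((R ** W) ** transpose R) ** R"
    by simp
  then show "Z = W" by (simp add: orthogonal_matrix_cancel[OF R] matrix_mul_assoc)
qed simp

lemma transpose_msym: "transpose (msym X) = msym X"
  by (simp add: msym_def transpose_scalar transpose_add add.commute)

lemma transpose_mskew: "transpose (mskew X) = - mskew X"
  by (simp add: mskew_def transpose_scalar transpose_diff) (metis minus_diff_eq scaleR_minus_right)

lemma msym_add_mskew: "msym X + mskew X = (X::real^'n^'n)"
  by (simp add: msym_def mskew_def scaleR_add_right[symmetric] scaleR_diff_right[symmetric])

lemma msym_diff: "msym (X - Y) = msym X - msym (Y::real^'n^'n)"
  by (simp add: msym_def transpose_diff algebra_simps)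

lemma mskew_diff: "mskew (X - Y) = mskew X - mskew (Y::real^'n^'n)"
  by (simp add: mskew_def transpose_diff algebra_simps)

lemma msym_scaleR: "msym (c *\<^sub>R X) = c *\<^sub>R msym (X::real^'n^'n)"
  by (simp add: msym_def transpose_scalar algebra_simps)

lemma msym_mat_1 [simp]: "msym (mat 1 :: real^'n^'n) = mat 1"
  by (simp add: msym_def scaleR_2[symmetric])

lemma mskew_mat_1 [simp]: "mskew (mat 1 :: real^'n^'n) = 0"
  by (simp add: mskew_def)

lemma inner_msym_right:
  "transpose S = S \<Longrightarrow> S \<bullet> msym (Y::real^'n^'n) = S \<bullet> Y"
  using inner_transpose_transpose[of S Y] by (simp add: msym_def inner_add_right)

lemma inner_mskew_right:
  "transpose S = - S \<Longrightarrow> S \<bullet> mskew (Y::real^'n^'n) = S \<bullet> Y"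
  using inner_transpose_transpose[of S Y] by (simp add: mskew_def inner_diff_right)

lemma inner_msym_mskew: "msym X \<bullet> mskew (X::real^'n^'n) = 0"
  using inner_transpose_transpose[of "msym X" "mskew X"]
  by (simp add: transpose_msym transpose_mskew)

definition elem_mat :: "'n \<Rightarrow> 'n \<Rightarrow> real^'n^'n" where
  "elem_mat p q = (\<chi> a b. if a = p \<and> b = q then 1 else 0)"

lemma elem_mat_mult: "elem_mat p q ** elem_mat r s = (if q = r then elem_mat p s else 0)"
proof -
  have "(\<Sum>k\<in>UNIV. (if a = p \<and> k = q then 1 else 0) * (if k = r \<and> b = s then 1 else 0))
        = (if a = p \<and> q = r \<and> b = s then 1 else (0::real))" for a b
  proof -
    have "(\<Sum>k\<in>UNIV. (if a = p \<and> k = q then 1 else 0) * (if k = r \<and> b = s then 1 else (0::real)))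
       = (\<Sum>k\<in>UNIV. if k = q then (if a = p \<and> q = r \<and> b = s then 1 else 0) else 0)"
      by (rule sum.cong) auto
    then show ?thesis by simp
  qed
  then show ?thesis
    by (auto simp: elem_mat_def matrix_matrix_mult_def vec_eq_iff)
qed

lemma transpose_elem_mat: "transpose (elem_mat p q) = elem_mat q p"
  by (auto simp: elem_mat_def transpose_def vec_eq_iff)

lemma inner_elem_mat: "elem_mat p q \<bullet> S = S $ p $ q"
proof -
  have "(\<Sum>b\<in>UNIV. (if a = p \<and> b = q then 1 else 0) * S$a$b) = (if a = p then S$p$q else 0)" for a
  proof -
    have "(\<Sum>b\<in>UNIV. (if a = p \<and> b = q then 1 else 0) * S$a$b)
        = (\<Sum>b\<in>UNIV. if b = q then (if a = p then S$a$q else 0) else 0)"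
      by (rule sum.cong) auto
    then show ?thesis by simp
  qed
  then show ?thesis by (simp add: elem_mat_def inner_vec_def)
qed

definition plane_diag :: "'n \<Rightarrow> 'n \<Rightarrow> real^'n^'n" where
  "plane_diag i j = elem_mat i i + elem_mat j j"

definition plane_skew :: "'n \<Rightarrow> 'n \<Rightarrow> real^'n^'n" where
  "plane_skew i j = elem_mat i j - elem_mat j i"

definition plane_rotation :: "'n \<Rightarrow> 'n \<Rightarrow> real \<Rightarrow> real^'n^'n" where
  "plane_rotation i j t = mat 1 + (cos t - 1) *\<^sub>R plane_diag i j + sin t *\<^sub>R plane_skew i j"

lemmas elem_mat_simps = elem_mat_mult transpose_elem_mat matrix_add_rdistrib
  matrix_add_ldistrib matrix_diff_rdistrib matrix_diff_ldistrib transpose_add transpose_diff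

lemma inner_plane_skew: "plane_skew i j \<bullet> S = S$i$j - S$j$i"
  by (simp add: plane_skew_def inner_diff_left inner_elem_mat)

lemma transpose_plane_diag: "transpose (plane_diag i j) = plane_diag i j"
  by (simp add: plane_diag_def elem_mat_simps)

lemma transpose_plane_skew: "transpose (plane_skew i j) = - plane_skew i j"
  by (simp add: plane_skew_def elem_mat_simps)

lemma plane_rotation_orthogonal:
  assumes ij: "i \<noteq> j"
  shows "orthogonal_matrix (plane_rotation i j t)"
proof -
  let ?D = "plane_diag i j" and ?K = "plane_skew i j" and ?c = "cos t - 1" and ?s = "sin t"
  have products: "?D ** ?D = ?D" "?K ** ?K = - ?D" "?D ** ?K = ?K" "?K ** ?D = ?K"
    using ij by (simp_all add: plane_diag_def plane_skew_def elem_mat_simps)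
  have expand: "(mat 1 + c *\<^sub>R ?D - s *\<^sub>R ?K) ** (mat 1 + c *\<^sub>R ?D + s *\<^sub>R ?K)
      = mat 1 + (2 * c + c * c + s * s) *\<^sub>R ?D" for c s
    by (simp add: elem_mat_simps matrix_scalar_ac scalar_matrix_assoc[symmetric] products)
       (simp add: vec_eq_iff algebra_simps)
  have "transpose (plane_rotation i j t) = mat 1 + ?c *\<^sub>R ?D - ?s *\<^sub>R ?K"
    by (simp add: plane_rotation_def transpose_add transpose_scalar transpose_plane_diag
        transpose_plane_skew)
  then have "transpose (plane_rotation i j t) ** plane_rotation i j t
      = mat 1 + (2 * ?c + ?c * ?c + ?s * ?s) *\<^sub>R ?D"
    by (simp only: plane_rotation_def expand)
  also have "2 * ?c + ?c * ?c + ?s * ?s = 0"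
    using sin_cos_squared_add[of t] by (simp add: algebra_simps power2_eq_square)
  finally show ?thesis
    by (simp add: orthogonal_matrix)
qed

lemma plane_rotation_0 [simp]: "plane_rotation i j 0 = mat 1"
  by (simp add: plane_rotation_def)

lemma plane_rotation_has_derivative:
  "(plane_rotation i j has_derivative (\<lambda>h. h *\<^sub>R plane_skew i j)) (at 0)"
proof -
  have "((\<lambda>t. cos t - 1) has_real_derivative 0) (at 0)"
    by (auto intro!: derivative_eq_intros)
  note c = this[unfolded has_field_derivative_def]
  have s: "(sin has_derivative (*) 1) (at (0::real))"
    using DERIV_sin[of "0::real"] unfolding has_field_derivative_def by simp
  have "(plane_rotation i j has_derivative
          (\<lambda>h. 0 + (0 * h) *\<^sub>R plane_diag i j + (1 * h) *\<^sub>R plane_skew i j)) (at 0)"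
    unfolding plane_rotation_def
    by (intro has_derivative_add has_derivative_const has_derivative_scaleR_left c s)
  then show ?thesis by simp
qed

lemma SOn_orthogonal: "R \<in> SOn \<Longrightarrow> orthogonal_matrix R"
  by (simp add: SOn_def)

lemma SOn_curve_through_plane_skew:
  assumes R: "R \<in> SOn" and ij: "i \<noteq> j"
  obtains \<gamma> where "\<And>t. \<gamma> t \<in> SOn" "\<gamma> 0 = R"
    "(\<gamma> has_derivative (\<lambda>h. h *\<^sub>R (2 *\<^sub>R (R ** plane_skew i j)))) (at 0)"
proof
  let ?P = "plane_rotation i j"
  \<comment> \<open>The rotation is squared so that its determinant is \<open>(\<plusminus>1)\<^sup>2 = 1\<close> without computing it.\<close>
  define \<gamma> where "\<gamma> = (\<lambda>t. R ** (?P t ** ?P t))"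
  show "\<gamma> t \<in> SOn" for t
  proof -
    have P: "orthogonal_matrix (?P t)"
      using plane_rotation_orthogonal[OF ij] .
    have "orthogonal_matrix (\<gamma> t)"
      unfolding \<gamma>_def by (intro orthogonal_matrix_mul SOn_orthogonal[OF R] P)
    moreover have "det (\<gamma> t) = 1"
      using det_orthogonal_matrix[OF P] R by (auto simp: \<gamma>_def det_mul SOn_def)
    ultimately show ?thesis by (simp add: SOn_def)
  qed
  show "\<gamma> 0 = R" by (simp add: \<gamma>_def)
  have "((\<lambda>t. ?P t ** ?P t) has_derivative
          (\<lambda>h. ?P 0 ** (h *\<^sub>R plane_skew i j) + (h *\<^sub>R plane_skew i j) ** ?P 0)) (at 0)"
    using bounded_bilinear.FDERIV[OF bounded_bilinear_matrix_mult
        plane_rotation_has_derivative plane_rotation_has_derivative] .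
  then have "((\<lambda>t. ?P t ** ?P t) has_derivative (\<lambda>h. h *\<^sub>R (2 *\<^sub>R plane_skew i j))) (at 0)"
    by (simp add: matrix_scalar_ac scalar_matrix_assoc[symmetric] scaleR_2)
  from bounded_linear.has_derivative[OF bounded_bilinear.bounded_linear_right[OF
      bounded_bilinear_matrix_mult, of R] this]
  show "(\<gamma> has_derivative (\<lambda>h. h *\<^sub>R (2 *\<^sub>R (R ** plane_skew i j)))) (at 0)"
    by (simp add: \<gamma>_def matrix_scalar_ac scalar_matrix_assoc[symmetric])
qed

lemma orthogonal_curve_velocity_skew:
  fixes \<gamma> :: "real \<Rightarrow> real^'n^'n"
  assumes \<gamma>: "(\<gamma> has_derivative (\<lambda>h. h *\<^sub>R V)) (at 0)"
    and orth: "\<And>t. transpose (\<gamma> t) ** \<gamma> t = mat 1"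
  shows "transpose (transpose (\<gamma> 0) ** V) = - (transpose (\<gamma> 0) ** V)"
proof -
  have "((\<lambda>t. transpose (\<gamma> t)) has_derivative (\<lambda>h. transpose (h *\<^sub>R V))) (at 0)"
    using bounded_linear.has_derivative[OF bounded_linear_transpose \<gamma>] .
  from bounded_bilinear.FDERIV[OF bounded_bilinear_matrix_mult this \<gamma>]
  have "((\<lambda>t. transpose (\<gamma> t) ** \<gamma> t) has_derivative
      (\<lambda>h. transpose (\<gamma> 0) ** (h *\<^sub>R V) + transpose (h *\<^sub>R V) ** \<gamma> 0)) (at 0)"
    by simp
  moreover have "((\<lambda>t. transpose (\<gamma> t) ** \<gamma> t) has_derivative (\<lambda>h. 0)) (at 0)"
    using orth by simp
  ultimately have "(\<lambda>h. transpose (\<gamma> 0) ** (h *\<^sub>R V) + transpose (h *\<^sub>R V) ** \<gamma> 0) = (\<lambda>h. 0)"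
    by (rule has_derivative_unique)
  then have "transpose (\<gamma> 0) ** (1 *\<^sub>R V) + transpose (1 *\<^sub>R V) ** \<gamma> 0 = 0"
    by meson
  then show ?thesis
    by (simp add: matrix_transpose_mul eq_neg_iff_add_eq_0 add.commute)
qed

lemma has_derivative_compose_curve:
  assumes f: "(f has_derivative (\<lambda>V. P \<bullet> V)) (at (\<gamma> 0))"
    and \<gamma>: "(\<gamma> has_derivative (\<lambda>h. h *\<^sub>R V)) (at 0)"
  shows "((f \<circ> \<gamma>) has_real_derivative (P \<bullet> V)) (at 0)"
proof -
  have "((f \<circ> \<gamma>) has_derivative (\<lambda>h. P \<bullet> (h *\<^sub>R V))) (at 0)"
    using diff_chain_at[OF \<gamma> f] by (simp add: o_def)
  then show ?thesis
    unfolding has_field_derivative_def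
    by (rule has_derivative_eq_rhs) (simp add: fun_eq_iff inner_scaleR_right mult.commute)
qed

lemma crit_SO_imp_symmetric:
  fixes R P :: "real^'n^'n"
  assumes crit: "crit_SO f R" and f: "(f has_derivative (\<lambda>V. P \<bullet> V)) (at R)"
  shows "transpose (transpose R ** P) = transpose R ** P"
proof -
  have R: "R \<in> SOn" using crit by (simp add: crit_SO_def)
  have "(transpose R ** P) $ i $ j = (transpose R ** P) $ j $ i" for i j
  proof (cases "i = j")
    case False
    obtain \<gamma> where \<gamma>: "\<And>t. \<gamma> t \<in> SOn" "\<gamma> 0 = R"
      "(\<gamma> has_derivative (\<lambda>h. h *\<^sub>R (2 *\<^sub>R (R ** plane_skew i j)))) (at 0)"
      using SOn_curve_through_plane_skew[OF R False] by blast
    have "\<gamma> differentiable (at 0)"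
      using \<gamma>(3) unfolding differentiable_def by blast
    then have "((f \<circ> \<gamma>) has_real_derivative 0) (at 0)"
      using crit \<gamma>(1,2) unfolding crit_SO_def by blast
    moreover have "((f \<circ> \<gamma>) has_real_derivative (P \<bullet> (2 *\<^sub>R (R ** plane_skew i j)))) (at 0)"
      using f \<gamma>(2) by (intro has_derivative_compose_curve[OF _ \<gamma>(3)]) simp
    ultimately have "P \<bullet> (2 *\<^sub>R (R ** plane_skew i j)) = 0"
      using DERIV_unique by blast
    moreover have "P \<bullet> (2 *\<^sub>R (R ** plane_skew i j)) = 2 * ((R ** plane_skew i j) \<bullet> P)"
      by (simp add: inner_commute)
    ultimately have "plane_skew i j \<bullet> (transpose R ** P) = 0"
      by (simp add: inner_matrix_mult_left)
    then show ?thesis by (simp add: inner_plane_skew)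
  qed simp
  then show ?thesis by (simp add: vec_eq_iff transpose_def)
qed

lemma symmetric_imp_crit_SO:
  fixes R P :: "real^'n^'n"
  assumes R: "R \<in> SOn" and f: "(f has_derivative (\<lambda>V. P \<bullet> V)) (at R)"
    and sym: "transpose (transpose R ** P) = transpose R ** P"
  shows "crit_SO f R"
  unfolding crit_SO_def
proof (intro conjI allI impI R)
  fix \<gamma> :: "real \<Rightarrow> real^'n^'n"
  assume \<gamma>: "(\<forall>t. \<gamma> t \<in> SOn) \<and> \<gamma> 0 = R \<and> \<gamma> differentiable (at 0)"
  define V where "V = vector_derivative \<gamma> (at 0)"
  have \<gamma>': "(\<gamma> has_derivative (\<lambda>h. h *\<^sub>R V)) (at 0)"
    using \<gamma> vector_derivative_works unfolding V_def has_vector_derivative_def by blast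
  define S where "S = transpose R ** P"
  define B where "B = transpose R ** V"
  have "transpose B = - B"
    using orthogonal_curve_velocity_skew[OF \<gamma>'] \<gamma> by (simp add: B_def SOn_def orthogonal_matrix)
  then have "B \<bullet> S = - (B \<bullet> S)"
    by (metis S_def sym inner_minus_left inner_transpose_transpose)
  moreover have "P \<bullet> V = B \<bullet> S"
  proof -
    have "V = R ** B"
      using SOn_orthogonal[OF R] by (simp add: B_def matrix_mul_assoc orthogonal_matrix_cancel)
    then have "P \<bullet> V = (R ** B) \<bullet> P" by (simp add: inner_commute)
    then show ?thesis by (simp add: S_def inner_matrix_mult_left)
  qed
  ultimately have "P \<bullet> V = 0" by simp
  then show "((f \<circ> \<gamma>) has_real_derivative 0) (at 0)"
    using has_derivative_compose_curve[of f P \<gamma> V] f \<gamma> \<gamma>' by simp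
qed

lemma crit_SO_iff_symmetric:
  fixes R P :: "real^'n^'n"
  assumes "R \<in> SOn" and "(f has_derivative (\<lambda>V. P \<bullet> V)) (at R)"
  shows "crit_SO f R \<longleftrightarrow> transpose (transpose R ** P) = transpose R ** P"
  using assms crit_SO_imp_symmetric symmetric_imp_crit_SO by blast

lemma crit_SO_affine_iff:
  assumes fg: "\<And>X. X \<in> SOn \<Longrightarrow> f X = a * g X + b" and a: "a \<noteq> 0"
  shows "crit_SO f R \<longleftrightarrow> crit_SO g R"
  unfolding crit_SO_def
proof (intro conj_cong refl all_cong imp_cong)
  fix \<gamma> :: "real \<Rightarrow> real^'a^'a"
  assume "(\<forall>t. \<gamma> t \<in> SOn) \<and> \<gamma> 0 = R \<and> \<gamma> differentiable at 0"
  then have fg\<gamma>: "f (\<gamma> t) = a * g (\<gamma> t) + b" for t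
    by (simp add: fg)
  show "((f \<circ> \<gamma>) has_real_derivative 0) (at 0) \<longleftrightarrow> ((g \<circ> \<gamma>) has_real_derivative 0) (at 0)"
  proof
    assume "((f \<circ> \<gamma>) has_real_derivative 0) (at 0)"
    then have "((\<lambda>t. (1/a) * ((f \<circ> \<gamma>) t - b)) has_real_derivative (1/a) * (0 - 0)) (at 0)"
      by (intro DERIV_cmult DERIV_diff DERIV_const)
    moreover have "(\<lambda>t. (1/a) * ((f \<circ> \<gamma>) t - b)) = g \<circ> \<gamma>"
      using a by (simp add: fun_eq_iff fg\<gamma>)
    ultimately show "((g \<circ> \<gamma>) has_real_derivative 0) (at 0)" by simp
  next
    assume "((g \<circ> \<gamma>) has_real_derivative 0) (at 0)"
    then have "((\<lambda>t. a * (g \<circ> \<gamma>) t + b) has_real_derivative a * 0 + 0) (at 0)"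
      by (intro DERIV_cmult DERIV_add DERIV_const)
    moreover have "(\<lambda>t. a * (g \<circ> \<gamma>) t + b) = f \<circ> \<gamma>"
      by (simp add: fun_eq_iff fg\<gamma>)
    ultimately show "((f \<circ> \<gamma>) has_real_derivative 0) (at 0)" by simp
  qed
qed

lemma bounded_linear_msym: "bounded_linear (msym :: real^'n^'n \<Rightarrow> real^'n^'n)"
  unfolding linear_conv_bounded_linear[symmetric]
  by (auto intro!: linearI simp: msym_def transpose_add transpose_scalar algebra_simps)

lemma bounded_linear_mskew: "bounded_linear (mskew :: real^'n^'n \<Rightarrow> real^'n^'n)"
  unfolding linear_conv_bounded_linear[symmetric]
  by (auto intro!: linearI simp: mskew_def transpose_add transpose_scalar algebra_simps)

definition Wt_stress :: "real \<Rightarrow> real \<Rightarrow> real^'n^'n \<Rightarrow> real^'n^'n \<Rightarrow> real^'n^'n" where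
  "Wt_stress mu muc F R =
     mu *\<^sub>R msym (transpose R ** F - mat 1) + muc *\<^sub>R mskew (transpose R ** F - mat 1)"

lemma Wt_has_derivative:
  fixes F R :: "real^'n^'n"
  shows "(Wt mu muc F has_derivative
           (\<lambda>V. (2 *\<^sub>R (F ** transpose (Wt_stress mu muc F R))) \<bullet> V)) (at R)"
proof -
  define E where "E X = transpose X ** F - mat 1" for X :: "real^'n^'n"
  have "(transpose has_derivative transpose) (at R)"
    by (rule bounded_linear_imp_has_derivative[OF bounded_linear_transpose])
  from bounded_linear.has_derivative[OF
      bounded_bilinear.bounded_linear_left[OF bounded_bilinear_matrix_mult] this]
  have E: "(E has_derivative (\<lambda>V. transpose V ** F)) (at R)"
    unfolding E_def[abs_def] by (rule has_derivative_diff[where g' = "\<lambda>_. 0", simplified])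
      (rule has_derivative_const)
  note sym = bounded_linear.has_derivative[OF bounded_linear_msym E]
  note skew = bounded_linear.has_derivative[OF bounded_linear_mskew E]
  have "(Wt mu muc F has_derivative (\<lambda>V.
          mu * (msym (E R) \<bullet> msym (transpose V ** F) + msym (transpose V ** F) \<bullet> msym (E R))
        + muc * (mskew (E R) \<bullet> mskew (transpose V ** F) + mskew (transpose V ** F) \<bullet> mskew (E R))))
        (at R)"
    unfolding Wt_def[abs_def] frob2_eq_inner E_def[symmetric]
    by (intro has_derivative_add has_derivative_mult_right has_derivative_inner sym skew)
  moreover have "(2 *\<^sub>R (F ** transpose (Wt_stress mu muc F R))) \<bullet> V
      = mu * (msym (E R) \<bullet> msym (transpose V ** F) + msym (transpose V ** F) \<bullet> msym (E R))
        + muc * (mskew (E R) \<bullet> mskew (transpose V ** F) + mskew (transpose V ** F) \<bullet> mskew (E R))"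
    for V
  proof -
    let ?N = "Wt_stress mu muc F R" and ?Y = "transpose V ** F"
    have "(F ** transpose ?N) \<bullet> V = V \<bullet> (F ** transpose ?N)"
      by (rule inner_commute)
    also have "\<dots> = trace ((transpose V ** F) ** transpose ?N)"
      by (simp add: inner_matrix_eq_trace matrix_mul_assoc)
    also have "\<dots> = ?N \<bullet> ?Y"
      by (simp add: inner_matrix_eq_trace trace_mul_sym[of _ "transpose ?N"])
    also have "\<dots> = mu * (msym (E R) \<bullet> ?Y) + muc * (mskew (E R) \<bullet> ?Y)"
      by (simp add: Wt_stress_def E_def inner_add_left)
    also have "\<dots> = mu * (msym (E R) \<bullet> msym ?Y) + muc * (mskew (E R) \<bullet> mskew ?Y)"
      by (simp add: inner_msym_right inner_mskew_right transpose_msym transpose_mskew)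
    finally show ?thesis
      by (simp add: inner_commute[of "msym ?Y"] inner_commute[of "mskew ?Y"] algebra_simps)
  qed
  ultimately show ?thesis
    by simp
qed

lemma crit_SO_Wt_iff:
  fixes F R :: "real^'n^'n"
  assumes R: "R \<in> SOn"
  defines "X \<equiv> transpose R ** F"
  shows "crit_SO (Wt mu muc F) R \<longleftrightarrow>
    transpose (X ** transpose (Wt_stress mu muc F R)) = X ** transpose (Wt_stress mu muc F R)"
proof -
  have "transpose R ** (2 *\<^sub>R (F ** transpose (Wt_stress mu muc F R)))
      = 2 *\<^sub>R (X ** transpose (Wt_stress mu muc F R))"
    by (simp add: X_def matrix_scalar_ac scalar_matrix_assoc[symmetric] matrix_mul_assoc)
  then show ?thesis
    using crit_SO_iff_symmetric[OF R Wt_has_derivative] by (simp add: transpose_scalar)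
qed

lemma crit_SO_Wt_equal_iff:
  fixes F R :: "real^'n^'n"
  assumes R: "R \<in> SOn" and mu: "mu \<noteq> 0"
  shows "crit_SO (Wt mu mu F) R \<longleftrightarrow> F ** transpose R = R ** transpose F"
proof -
  have o: "orthogonal_matrix R" using SOn_orthogonal[OF R] .
  define X where "X = transpose R ** F"
  have "Wt_stress mu mu F R = mu *\<^sub>R (X - mat 1)"
    by (simp add: Wt_stress_def X_def scaleR_add_right[symmetric] msym_add_mskew)
  then have XN: "X ** transpose (Wt_stress mu mu F R) = mu *\<^sub>R (X ** transpose X - X)"
    by (simp add: transpose_scalar transpose_diff matrix_scalar_ac
        scalar_matrix_assoc[symmetric] matrix_diff_ldistrib scaleR_diff_right)
  have "crit_SO (Wt mu mu F) R \<longleftrightarrow>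
      mu *\<^sub>R (X ** transpose X - transpose X) = mu *\<^sub>R (X ** transpose X - X)"
    using crit_SO_Wt_iff[OF R, of mu mu F]
    by (simp add: XN X_def[symmetric] transpose_scalar transpose_diff matrix_transpose_mul)
  also have "\<dots> \<longleftrightarrow> (R ** transpose X) ** transpose R = (R ** X) ** transpose R"
    using mu orthogonal_conj_eq_iff[OF o] by simp
  also have "\<dots> \<longleftrightarrow> R ** transpose F = F ** transpose R"
    by (simp add: X_def matrix_transpose_mul matrix_mul_assoc orthogonal_matrix_cancel[OF o])
  finally show ?thesis by auto
qed

text \<open>For R in SO(n), \<open>\<parallel>sym(R\<^sup>T F)\<parallel>\<^sup>2 + \<parallel>skew(R\<^sup>T F)\<parallel>\<^sup>2 = \<parallel>F\<parallel>\<^sup>2\<close> eliminates the skew part; what remains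
  is a quadratic in \<open>sym(R\<^sup>T F)\<close> proportional, up to a constant, to the one defining
  \<open>W\<^sub>1\<^sub>,\<^sub>0(R; Fhat)\<close>.\<close>

lemma Wt_eq_affine_Wt_Fhat:
  fixes R F :: "real^'n^'n"
  assumes R: "R \<in> SOn" and mu: "mu \<noteq> 0" and ne: "mu \<noteq> muc"
  defines "c \<equiv> mu\<^sup>2 / (mu - muc)" and "I \<equiv> mat 1 :: real^'n^'n"
  shows "Wt mu muc F R = c * Wt 1 0 (Fhat mu muc F) R + (mu * (I \<bullet> I) + muc * (F \<bullet> F) - c * (I \<bullet> I))"
proof -
  define X where "X = transpose R ** F"
  define k where "k = (mu - muc) / mu"
  define A where "A = msym X"
  define B where "B = mskew X"
  have RFhat: "transpose R ** Fhat mu muc F = k *\<^sub>R X"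
    by (simp add: Fhat_def k_def X_def matrix_scalar_ac scalar_matrix_assoc[symmetric])
  have W: "Wt mu muc F R = mu * ((A - I) \<bullet> (A - I)) + muc * (B \<bullet> B)"
    by (simp add: Wt_def frob2_eq_inner msym_diff mskew_diff A_def B_def I_def X_def)
  have W10: "Wt 1 0 (Fhat mu muc F) R = (k *\<^sub>R A - I) \<bullet> (k *\<^sub>R A - I)"
    by (simp add: Wt_def frob2_eq_inner RFhat msym_diff msym_scaleR A_def I_def)
  have "X \<bullet> X = F \<bullet> F"
    unfolding inner_matrix_eq_trace X_def
    by (simp add: matrix_transpose_mul matrix_mul_assoc orthogonal_matrix_cancel[OF SOn_orthogonal[OF R]])
  moreover have "X = A + B" and "A \<bullet> B = 0"
    by (simp_all add: A_def B_def msym_add_mskew inner_msym_mskew)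
  ultimately have BB: "B \<bullet> B = F \<bullet> F - A \<bullet> A"
    by (simp add: inner_add_left inner_add_right inner_commute)
  have "c * k\<^sup>2 = mu - muc" and "c * (2 * k) = 2 * mu"
    using mu ne by (simp_all add: c_def k_def field_simps power2_eq_square)
  moreover have "c * ((k *\<^sub>R A - I) \<bullet> (k *\<^sub>R A - I))
      = (c * k\<^sup>2) * (A \<bullet> A) - (c * (2 * k)) * (A \<bullet> I) + c * (I \<bullet> I)"
    by (simp add: inner_diff_left inner_diff_right inner_commute algebra_simps power2_eq_square)
  ultimately have "c * ((k *\<^sub>R A - I) \<bullet> (k *\<^sub>R A - I))
      = (mu - muc) * (A \<bullet> A) - (2 * mu) * (A \<bullet> I) + c * (I \<bullet> I)"
    by (simp only:)
  moreover have "(A - I) \<bullet> (A - I) = A \<bullet> A - 2 * (A \<bullet> I) + I \<bullet> I"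
    by (simp add: inner_diff_left inner_diff_right inner_commute)
  ultimately show ?thesis
    unfolding W W10 BB by (simp add: algebra_simps)
qed

lemma crit_SO_Wt_1_0_iff:
  fixes R G :: "real^'n^'n"
  assumes R: "R \<in> SOn"
  shows "crit_SO (Wt 1 0 G) R \<longleftrightarrow>
    G ** transpose R ** G ** transpose R - R ** transpose G ** R ** transpose G
      = 2 *\<^sub>R (G ** transpose R - R ** transpose G)"
proof -
  have o: "orthogonal_matrix R" using SOn_orthogonal[OF R] .
  define Y where "Y = transpose R ** G"
  have "Y ** transpose (Wt_stress 1 0 G R) = (1/2) *\<^sub>R (Y ** Y + Y ** transpose Y) - Y"
    by (simp add: Wt_stress_def Y_def[symmetric] msym_diff transpose_diff transpose_msym)
       (simp add: msym_def matrix_diff_ldistrib matrix_add_ldistrib matrix_scalar_ac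
        scalar_matrix_assoc[symmetric] scaleR_add_right)
  then have "crit_SO (Wt 1 0 G) R \<longleftrightarrow>
      (1/2) *\<^sub>R (Y ** transpose Y + transpose Y ** transpose Y) - transpose Y
      = (1/2) *\<^sub>R (Y ** Y + Y ** transpose Y) - Y"
    using crit_SO_Wt_iff[OF R, of 1 0 G]
    by (simp add: Y_def[symmetric] transpose_diff transpose_add transpose_scalar
        matrix_transpose_mul add.commute)
  also have "\<dots> \<longleftrightarrow> Y ** Y - transpose Y ** transpose Y = 2 *\<^sub>R (Y - transpose Y)"
    by (simp add: vec_eq_iff) (intro iff_allI; simp add: field_simps; arith)
  also have "\<dots> \<longleftrightarrow> (R ** (Y ** Y - transpose Y ** transpose Y)) ** transpose R
       = (R ** (2 *\<^sub>R (Y - transpose Y))) ** transpose R"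
    using orthogonal_conj_eq_iff[OF o] by blast
  also have "\<dots> \<longleftrightarrow> G ** transpose R ** G ** transpose R - R ** transpose G ** R ** transpose G
      = 2 *\<^sub>R (G ** transpose R - R ** transpose G)"
    by (simp add: Y_def matrix_diff_ldistrib matrix_diff_rdistrib matrix_scalar_ac
        scalar_matrix_assoc[symmetric] matrix_transpose_mul matrix_mul_assoc
        orthogonal_matrix_cancel[OF o] scaleR_diff_right)
  finally show ?thesis .
qed

theorem mainTheorem4:
  fixes F :: "real^'n^'n" and mu muc :: real
  assumes "CARD('n) \<ge> 2" and "det F > 0" and "mu > 0" and "muc \<ge> 0"
  shows "(mu = muc \<longrightarrow>
            (\<forall>R \<in> SOn. crit_SO (Wt mu muc F) R \<longleftrightarrow> F ** transpose R = R ** transpose F))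
       \<and> (mu \<noteq> muc \<longrightarrow>
            (\<forall>R \<in> SOn.
               (crit_SO (Wt mu muc F) R \<longleftrightarrow> crit_SO (Wt 1 0 (Fhat mu muc F)) R)
             \<and> (crit_SO (Wt 1 0 (Fhat mu muc F)) R \<longleftrightarrow>
                  (let G = Fhat mu muc F in
                   G ** transpose R ** G ** transpose R - R ** transpose G ** R ** transpose G
                   = 2 *\<^sub>R (G ** transpose R - R ** transpose G)))))"
proof (intro conjI impI ballI)
  fix R :: "real^'n^'n"
  assume "mu = muc" and "R \<in> SOn"
  then show "crit_SO (Wt mu muc F) R \<longleftrightarrow> F ** transpose R = R ** transpose F"
    using crit_SO_Wt_equal_iff[of R mu F] \<open>mu > 0\<close> by simp
next
  fix R :: "real^'n^'n"
  assume ne: "mu \<noteq> muc" and R: "R \<in> SOn"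
  have "mu\<^sup>2 / (mu - muc) \<noteq> 0" using ne \<open>mu > 0\<close> by simp
  with ne \<open>mu > 0\<close> show "crit_SO (Wt mu muc F) R \<longleftrightarrow> crit_SO (Wt 1 0 (Fhat mu muc F)) R"
    by (intro crit_SO_affine_iff[OF Wt_eq_affine_Wt_Fhat]) auto
  show "crit_SO (Wt 1 0 (Fhat mu muc F)) R \<longleftrightarrow>
          (let G = Fhat mu muc F in
           G ** transpose R ** G ** transpose R - R ** transpose G ** R ** transpose G
           = 2 *\<^sub>R (G ** transpose R - R ** transpose G))"
    unfolding Let_def by (rule crit_SO_Wt_1_0_iff[OF R])
qed
end
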